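(* Let $f$ and $g$ be full-branch Markov maps on $[-1,1]$ which both satisfy the partition spacing condition (P). Suppose in addition that $f$ has bounded distortion with constant $C^{(f)}_1$ and that $g$ has uniform expansion parameter $\lambda^{(g)}=\inf|g'|>0$. Then $g\circ f$ satisfies (P).
   Context: A full-branch Markov map of $[-1,1]$ has disjoint open branch intervals $\mathcal{O}_\iota$, $\iota\in I$ ($I$ countable), covering $[-1,1]$ up to a countable set, with $f|_{\mathcal{O}_\iota}$ extending to a $C^2$ bijection $\hat f_\iota:\overline{\mathcal{O}_\iota}\to[-1,1]$; $v_\iota=\hat f_\iota^{-1}$. Bounded distortion: $C_1=\sup_{\iota,x}|v_\iota''(x)/v_\iota'(x)|<\infty$. Partition spacing condition (P): $\Xi:=\sup\{|\mathcal{O}_\iota|/d(\mathcal{O}_\iota,\sigma):\iota\in I,\ \sigma\in\{-1,1\},\ \sigma\notin\overline{\mathcal{O}_\iota}\}<\infty$. The branch intervals of $g\circ f$ are the interiors of $v^{(f)}_\phi(v^{(g)}_\gamma([-1,1]))$ over pairs of branches $\phi$ of $f$ and $\gamma$ of $g$. *)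

theory Defs
  imports "HOL-Analysis.Analysis"
begin

definition C2_on_interval :: "(real \<Rightarrow> real) \<Rightarrow> real \<Rightarrow> real \<Rightarrow> bool" where
  "C2_on_interval h l r \<longleftrightarrow>
     (\<exists>d1 d2. (\<forall>x\<in>{l..r}. (h has_real_derivative d1 x) (at x within {l..r}) \<and>
                            (d1 has_real_derivative d2 x) (at x within {l..r}))
            \<and> continuous_on {l..r} d2)"

definition full_branch_markov ::
  "(real \<Rightarrow> real) \<Rightarrow> 'i set \<Rightarrow> ('i \<Rightarrow> real) \<Rightarrow> ('i \<Rightarrow> real) \<Rightarrow> ('i \<Rightarrow> real \<Rightarrow> real) \<Rightarrow> bool" where
  "full_branch_markov f I a b fh \<longleftrightarrow>
     countable I \<and>
     (\<forall>i\<in>I. -1 \<le> a i \<and> a i < b i \<and> b i \<le> 1) \<and>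
     (\<forall>i\<in>I. \<forall>j\<in>I. i \<noteq> j \<longrightarrow> {a i<..<b i} \<inter> {a j<..<b j} = {}) \<and>
     countable ({-1..1} - (\<Union>i\<in>I. {a i<..<b i})) \<and>
     (\<forall>i\<in>I. \<forall>x\<in>{a i<..<b i}. fh i x = f x) \<and>
     (\<forall>i\<in>I. bij_betw (fh i) {a i..b i} {-1..1}) \<and>
     (\<forall>i\<in>I. C2_on_interval (fh i) (a i) (b i))"

definition inv_branch :: "('i \<Rightarrow> real) \<Rightarrow> ('i \<Rightarrow> real) \<Rightarrow> ('i \<Rightarrow> real \<Rightarrow> real) \<Rightarrow> 'i \<Rightarrow> real \<Rightarrow> real" where
  "inv_branch a b fh i = inv_into {a i..b i} (fh i)"

definition bounded_distortion ::
  "'i set \<Rightarrow> ('i \<Rightarrow> real) \<Rightarrow> ('i \<Rightarrow> real) \<Rightarrow> ('i \<Rightarrow> real \<Rightarrow> real) \<Rightarrow> bool" where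
  "bounded_distortion I a b fh \<longleftrightarrow>
     (\<exists>C. \<forall>i\<in>I. \<exists>v1 v2. \<forall>x\<in>{-1..1}.
        (inv_branch a b fh i has_real_derivative v1 x) (at x within {-1..1}) \<and>
        (v1 has_real_derivative v2 x) (at x within {-1..1}) \<and>
        \<bar>v2 x / v1 x\<bar> \<le> C)"

definition uniformly_expanding ::
  "(real \<Rightarrow> real) \<Rightarrow> 'i set \<Rightarrow> ('i \<Rightarrow> real) \<Rightarrow> ('i \<Rightarrow> real) \<Rightarrow> bool" where
  "uniformly_expanding f I a b \<longleftrightarrow>
     (\<exists>lam>0. \<forall>i\<in>I. \<forall>x\<in>{a i<..<b i}. lam \<le> \<bar>deriv f x\<bar>)"

definition partition_spacing :: "real set set \<Rightarrow> bool" where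
  "partition_spacing S \<longleftrightarrow>
     (\<exists>\<Xi>. \<forall>U\<in>S. \<forall>\<sigma>\<in>{-1,1::real}. \<sigma> \<notin> closure U \<longrightarrow> diameter U / infdist \<sigma> U \<le> \<Xi>)"

definition branches :: "'i set \<Rightarrow> ('i \<Rightarrow> real) \<Rightarrow> ('i \<Rightarrow> real) \<Rightarrow> real set set" where
  "branches I a b = (\<lambda>i. {a i<..<b i}) ` I"

text \<open>Branch intervals of g o f: interiors of v^f_phi(v^g_gamma([-1,1])).\<close>
definition comp_branches ::
  "'i set \<Rightarrow> ('i \<Rightarrow> real) \<Rightarrow> ('i \<Rightarrow> real) \<Rightarrow> ('i \<Rightarrow> real \<Rightarrow> real) \<Rightarrow>
   'j set \<Rightarrow> ('j \<Rightarrow> real) \<Rightarrow> ('j \<Rightarrow> real) \<Rightarrow> ('j \<Rightarrow> real \<Rightarrow> real) \<Rightarrow> real set set" where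
  "comp_branches Jf af bf fhf Jg ag bg fhg =
     {interior (inv_branch af bf fhf \<phi> ` (inv_branch ag bg fhg \<gamma> ` {-1..1})) | \<phi> \<gamma>. \<phi> \<in> Jf \<and> \<gamma> \<in> Jg}"

end

theory Submission
  imports Defs
begin

text \<open>Let \<open>v\<close> be an inverse branch of \<open>f\<close>. Bounded distortion makes \<open>\<bar>v'\<bar>\<close> comparable at any
  two points of \<open>[-1,1]\<close>, so \<open>v\<close> is bi-Lipschitz and the ratio \<open>K\<close> of its two Lipschitz constants
  is bounded independently of the branch. A branch interval of \<open>g \<circ> f\<close> is the interior of
  \<open>v [c,d]\<close> for a branch interval \<open>(c,d)\<close> of \<open>g\<close>. If the boundary point \<open>\<sigma>\<close> lies outside the
  closure of the \<open>f\<close>-branch \<open>v [-1,1]\<close>, the composite branch is a subinterval of that branch,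
  hence no larger and no closer to \<open>\<sigma>\<close>, so condition (P) for \<open>f\<close> applies. Otherwise
  \<open>\<sigma> = v \<tau>\<close> with \<open>\<tau> = \<plusminus>1\<close>, and the bi-Lipschitz bounds transport (P) for \<open>g\<close> at \<open>\<tau>\<close>, at
  the cost of the factor \<open>K\<close>.\<close>

definition bilipschitz_on :: "real \<Rightarrow> real \<Rightarrow> real set \<Rightarrow> (real \<Rightarrow> real) \<Rightarrow> bool" where
  "bilipschitz_on m M S v \<longleftrightarrow>
     0 < m \<and> M-lipschitz_on S v \<and> (\<forall>x\<in>S. \<forall>y\<in>S. m * dist x y \<le> dist (v x) (v y))"

definition spacing_ratio :: "'a::metric_space set \<Rightarrow> 'a \<Rightarrow> real" where
  "spacing_ratio U \<sigma> = diameter U / infdist \<sigma> U"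

lemma partition_spacing_iff_spacing_ratio:
  "partition_spacing S \<longleftrightarrow>
     (\<exists>\<Xi>. \<forall>U\<in>S. \<forall>\<sigma>\<in>{-1,1}. \<sigma> \<notin> closure U \<longrightarrow> spacing_ratio U \<sigma> \<le> \<Xi>)"
  by (simp add: partition_spacing_def spacing_ratio_def)

lemma has_real_derivative_inv_into_nonzero:
  fixes h :: "real \<Rightarrow> real"
  assumes bij: "bij_betw h {l..r} {-1..1}"
    and dh: "\<And>y. y \<in> {l..r} \<Longrightarrow> (h has_real_derivative h' y) (at y within {l..r})"
    and dv: "(inv_into {l..r} h has_real_derivative w) (at x within {-1..1})"
    and x: "x \<in> {-1<..<1}"
  shows "w \<noteq> 0"
proof -
  let ?v = "inv_into {l..r} h"
  have img: "?v ` {-1..1} = {l..r}"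
    using bij_betw_inv_into[OF bij] by (simp add: bij_betw_def)
  have "?v x \<in> {l..r}"
    using img x by auto
  then have "(h \<circ> ?v has_real_derivative h' (?v x) * w) (at x within {-1..1})"
    using DERIV_image_chain[OF _ dv] dh img by metis
  moreover have "at x within {-1..1} = at x"
    using x by (intro at_within_interior) simp
  ultimately have "(h \<circ> ?v has_real_derivative h' (?v x) * w) (at x)"
    by simp
  then have "((\<lambda>t. t) has_real_derivative h' (?v x) * w) (at x)"
    by (rule has_field_derivative_transform_within_open[where S="{-1<..<1}"])
       (use x bij_betw_inv_into_right[OF bij] in auto)
  then have "h' (?v x) * w = 1"
    using DERIV_ident DERIV_unique by blast
  then show ?thesis
    by auto
qed

lemma abs_le_exp_mult_abs_of_log_derivative_bound:
  fixes w w' :: "real \<Rightarrow> real"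
  assumes "x \<le> y"
    and deriv: "\<And>t. t \<in> {x..y} \<Longrightarrow> (w has_real_derivative w' t) (at t within {x..y})"
    and nonzero: "\<And>t. t \<in> {x..y} \<Longrightarrow> w t \<noteq> 0"
    and bound: "\<And>t. t \<in> {x..y} \<Longrightarrow> \<bar>w' t / w t\<bar> \<le> C"
  shows "\<bar>w x\<bar> \<le> exp (C * (y - x)) * \<bar>w y\<bar>" and "\<bar>w y\<bar> \<le> exp (C * (y - x)) * \<bar>w x\<bar>"
proof -
  \<comment> \<open>Differentiating \<open>ln (w\<^sup>2)\<close> rather than \<open>ln \<bar>w\<bar>\<close> avoids tracking the sign of \<open>w\<close>.\<close>
  have "((\<lambda>t. ln (w t ^ 2)) has_derivative (*) (2 * (w' t / w t))) (at t within {x..y})"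
    if "t \<in> {x..y}" for t
  proof -
    have "0 < w t ^ 2"
      using nonzero[OF that] by simp
    from DERIV_chain'[OF DERIV_power[OF deriv[OF that], of 2] DERIV_ln_divide[OF this]]
    have "((\<lambda>t. ln (w t ^ 2)) has_real_derivative 2 * (w' t * w t) / w t ^ 2) (at t within {x..y})"
      by simp
    moreover have "2 * (w' t * w t) / w t ^ 2 = 2 * (w' t / w t)"
      using nonzero[OF that] by (simp add: power2_eq_square)
    ultimately show ?thesis
      unfolding has_field_derivative_def[symmetric] by (rule DERIV_cong)
  qed
  then obtain z where z: "z \<in> {x..y}"
    and mvt: "ln (w y ^ 2) - ln (w x ^ 2) = 2 * (w' z / w z) * (y - x)"
    using mvt_very_simple[OF \<open>x \<le> y\<close>, of "\<lambda>t. ln (w t ^ 2)" "\<lambda>t. (*) (2 * (w' t / w t))"]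
    by auto
  have "\<bar>ln (w y ^ 2) - ln (w x ^ 2)\<bar> = 2 * \<bar>w' z / w z\<bar> * (y - x)"
    using \<open>x \<le> y\<close> unfolding mvt by (simp add: abs_mult)
  also have "\<dots> \<le> 2 * C * (y - x)"
    using bound[OF z] \<open>x \<le> y\<close> by (intro mult_right_mono) auto
  finally have log_bound: "\<bar>ln (w y ^ 2) - ln (w x ^ 2)\<bar> \<le> 2 * C * (y - x)" .
  have "exp (ln (w x ^ 2)) \<le> exp (2 * C * (y - x)) * exp (ln (w y ^ 2))"
    "exp (ln (w y ^ 2)) \<le> exp (2 * C * (y - x)) * exp (ln (w x ^ 2))"
    using log_bound by (simp_all flip: exp_add)
  moreover have "exp (2 * C * (y - x)) = exp (C * (y - x)) ^ 2"
    by (simp add: power2_eq_square flip: exp_add)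
  moreover have "exp (ln (w t ^ 2)) = w t ^ 2" if "t \<in> {x..y}" for t
    using nonzero[OF that] by simp
  ultimately have "w x ^ 2 \<le> (exp (C * (y - x)) * \<bar>w y\<bar>) ^ 2"
    "w y ^ 2 \<le> (exp (C * (y - x)) * \<bar>w x\<bar>) ^ 2"
    using \<open>x \<le> y\<close> by (simp_all add: power_mult_distrib)
  then show "\<bar>w x\<bar> \<le> exp (C * (y - x)) * \<bar>w y\<bar>" "\<bar>w y\<bar> \<le> exp (C * (y - x)) * \<bar>w x\<bar>"
    by (metis abs_le_square_iff abs_mult abs_abs abs_exp_cancel)+
qed

lemma bilipschitz_on_of_derivative_bounds:
  fixes v v' :: "real \<Rightarrow> real"
  assumes "l < r" and "0 < m"
    and deriv: "\<And>t. t \<in> {l..r} \<Longrightarrow> (v has_real_derivative v' t) (at t within {l..r})"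
    and lower: "\<And>t. t \<in> {l<..<r} \<Longrightarrow> m \<le> \<bar>v' t\<bar>"
    and upper: "\<And>t. t \<in> {l<..<r} \<Longrightarrow> \<bar>v' t\<bar> \<le> M"
  shows "bilipschitz_on m M {l..r} v"
proof -
  have "0 \<le> M"
    using upper[of "(l + r) / 2"] \<open>l < r\<close> by auto
  have bounds: "m * dist x y \<le> dist (v x) (v y) \<and> dist (v x) (v y) \<le> M * dist x y"
    if xy: "x \<in> {l..r}" "y \<in> {l..r}" "x < y" for x y
  proof -
    have "(v has_derivative (*) (v' t)) (at t within {x..y})" if "x \<le> t" "t \<le> y" for t
      using deriv[of t] that xy
      by (auto simp: has_field_derivative_def[symmetric] intro: DERIV_subset)
    then obtain z where z: "z \<in> {x<..<y}" and mvt: "v y - v x = v' z * (y - x)"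
      using mvt_simple[OF \<open>x < y\<close>, of v "\<lambda>t. (*) (v' t)"] by auto
    have "dist (v x) (v y) = \<bar>v' z\<bar> * dist x y"
      by (metis dist_real_def dist_commute mvt abs_mult)
    moreover have "z \<in> {l<..<r}"
      using z xy by auto
    ultimately show ?thesis
      using lower upper by (simp add: mult_right_mono)
  qed
  have "m * dist x y \<le> dist (v x) (v y) \<and> dist (v x) (v y) \<le> M * dist x y"
    if "x \<in> {l..r}" "y \<in> {l..r}" for x y
    using bounds[of x y] bounds[of y x] that by (cases x y rule: linorder_cases) (auto simp: dist_commute)
  then show ?thesis
    unfolding bilipschitz_on_def using \<open>0 < m\<close> \<open>0 \<le> M\<close> by (auto intro: lipschitz_onI)
qed

lemma bilipschitz_on_of_distortion_bound:
  fixes v v' v'' :: "real \<Rightarrow> real"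
  assumes "l < r" and "p \<in> {l<..<r}" and "0 \<le> C"
    and deriv: "\<And>t. t \<in> {l..r} \<Longrightarrow> (v has_real_derivative v' t) (at t within {l..r})"
    and deriv2: "\<And>t. t \<in> {l..r} \<Longrightarrow> (v' has_real_derivative v'' t) (at t within {l..r})"
    and distortion: "\<And>t. t \<in> {l..r} \<Longrightarrow> \<bar>v'' t / v' t\<bar> \<le> C"
    and nonzero: "\<And>t. t \<in> {l<..<r} \<Longrightarrow> v' t \<noteq> 0"
  defines "K \<equiv> exp (C * (r - l))"
  shows "bilipschitz_on (\<bar>v' p\<bar> / K) (K * \<bar>v' p\<bar>) {l..r} v"
proof -
  have comparable: "\<bar>v' s\<bar> \<le> K * \<bar>v' t\<bar>" if st: "s \<in> {l<..<r}" "t \<in> {l<..<r}" for s t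
  proof -
    have *: "\<bar>v' x\<bar> \<le> exp (C * (y - x)) * \<bar>v' y\<bar> \<and> \<bar>v' y\<bar> \<le> exp (C * (y - x)) * \<bar>v' x\<bar>"
      if xy: "x \<le> y" "x \<in> {l<..<r}" "y \<in> {l<..<r}" for x y
    proof -
      have sub: "{x..y} \<subseteq> {l<..<r}"
        using xy by auto
      have "(v' has_real_derivative v'' t) (at t within {x..y})" if "t \<in> {x..y}" for t
        by (rule DERIV_subset[OF deriv2]) (use that xy in auto)
      moreover have "v' t \<noteq> 0" "\<bar>v'' t / v' t\<bar> \<le> C" if "t \<in> {x..y}" for t
        using nonzero distortion that sub by auto
      ultimately show ?thesis
        using abs_le_exp_mult_abs_of_log_derivative_bound[OF \<open>x \<le> y\<close>] by blast
    qed
    have "\<bar>v' s\<bar> \<le> exp (C * \<bar>t - s\<bar>) * \<bar>v' t\<bar>"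
      using *[of s t] *[of t s] st by (cases "s \<le> t") auto
    also have "\<dots> \<le> K * \<bar>v' t\<bar>"
    proof (intro mult_right_mono)
      show "exp (C * \<bar>t - s\<bar>) \<le> K"
        unfolding K_def using st \<open>0 \<le> C\<close> by (auto intro!: mult_left_mono)
    qed simp
    finally show ?thesis .
  qed
  have "0 < K"
    unfolding K_def by simp
  moreover have "0 < \<bar>v' p\<bar>"
    using nonzero[OF \<open>p \<in> {l<..<r}\<close>] by simp
  moreover have "\<bar>v' p\<bar> / K \<le> \<bar>v' t\<bar>" if "t \<in> {l<..<r}" for t
    using comparable[OF \<open>p \<in> {l<..<r}\<close> that] \<open>0 < K\<close> by (simp add: divide_le_eq mult.commute)
  ultimately show ?thesis
    using comparable[OF _ \<open>p \<in> {l<..<r}\<close>]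
    by (intro bilipschitz_on_of_derivative_bounds[OF \<open>l < r\<close> _ deriv]) auto
qed

lemma spacing_ratio_mono:
  fixes U V :: "'a::metric_space set"
  assumes "U \<subseteq> V" and "bounded V" and "\<sigma> \<notin> closure V"
  shows "spacing_ratio U \<sigma> \<le> spacing_ratio V \<sigma>"
proof (cases "U = {}")
  case True
  then show ?thesis
    unfolding spacing_ratio_def
    using diameter_ge_0[OF assms(2)] infdist_nonneg[of \<sigma> V] by simp
next
  case False
  then have "V \<noteq> {}"
    using assms(1) by blast
  then have "0 < infdist \<sigma> V"
    using assms(3) in_closure_iff_infdist_zero[of V \<sigma>] infdist_nonneg[of \<sigma> V] by linarith
  moreover have "infdist \<sigma> V \<le> infdist \<sigma> U"
    using False assms(1) by (rule infdist_mono[rotated])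
  moreover have "diameter U \<le> diameter V"
    using assms(1,2) by (rule diameter_subset)
  ultimately show ?thesis
    unfolding spacing_ratio_def by (intro frac_le) (auto simp: diameter_ge_0 assms(2))
qed

lemma bilipschitz_on_continuous_on:
  "bilipschitz_on m M S v \<Longrightarrow> continuous_on S v"
  unfolding bilipschitz_on_def by (blast intro: lipschitz_on_continuous_on)

lemma bilipschitz_on_inj_on:
  assumes "bilipschitz_on m M S v"
  shows "inj_on v S"
proof (rule inj_onI)
  fix x y assume "x \<in> S" "y \<in> S" "v x = v y"
  then have "m * dist x y \<le> 0"
    using assms unfolding bilipschitz_on_def by force
  then show "x = y"
    using assms unfolding bilipschitz_on_def by (simp add: mult_le_0_iff)
qed

lemma continuous_inj_on_extremal_value_at_endpoint:
  fixes v :: "real \<Rightarrow> real"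
  assumes "continuous_on {l..r} v" and "inj_on v {l..r}" and "v ` {l..r} \<subseteq> {p..q}"
    and "\<tau> \<in> {l..r}" and "v \<tau> \<in> {p, q}"
  shows "\<tau> \<in> {l, r}"
proof (rule ccontr)
  assume "\<tau> \<notin> {l, r}"
  then have "l < \<tau>" "\<tau> < r"
    using \<open>\<tau> \<in> {l..r}\<close> by auto
  then have "v l < v \<tau> \<and> v \<tau> < v r \<or> v r < v \<tau> \<and> v \<tau> < v l"
    using continuous_inj_imp_mono assms(1,2) by blast
  moreover have "l \<in> {l..r}" "r \<in> {l..r}"
    using \<open>l < \<tau>\<close> \<open>\<tau> < r\<close> by auto
  then have "v l \<in> {p..q}" "v r \<in> {p..q}"
    using assms(3) by blast+
  ultimately show False
    using assms(5) by auto
qed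

lemma closure_interior_bilipschitz_image:
  assumes "bilipschitz_on m M S v" and "{c..d} \<subseteq> S" and "c < d"
  shows "closure (interior (v ` {c..d})) = v ` {c..d}"
proof -
  have seg: "closed_segment c d = {c..d}"
    using \<open>c < d\<close> by (simp add: closed_segment_eq_real_ivl)
  have "continuous_on {c..d} v"
    using continuous_on_subset[OF bilipschitz_on_continuous_on[OF assms(1)] assms(2)] .
  moreover have inj: "inj_on v {c..d}"
    using inj_on_subset[OF bilipschitz_on_inj_on[OF assms(1)] assms(2)] .
  ultimately have image: "v ` {c..d} = closed_segment (v c) (v d)"
    using continuous_injective_image_segment_1[of c d v] seg by simp
  have "v c \<noteq> v d"
    using inj_onD[OF inj, of c d] \<open>c < d\<close> by auto
  then show ?thesis
    by (simp add: image interior_closed_segment)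
qed

lemma diameter_image_le_lipschitz:
  fixes v :: "real \<Rightarrow> real"
  assumes "M-lipschitz_on {c..d} v" and "c \<le> d"
  shows "diameter (v ` {c..d}) \<le> M * (d - c)"
proof (rule diameter_le)
  show "v ` {c..d} \<noteq> {} \<or> 0 \<le> M * (d - c)"
    using \<open>c \<le> d\<close> by simp
  fix x y assume "x \<in> v ` {c..d}" "y \<in> v ` {c..d}"
  then obtain s t where st: "s \<in> {c..d}" "t \<in> {c..d}" "x = v s" "y = v t"
    by auto
  have "dist (v s) (v t) \<le> M * dist s t"
    using lipschitz_onD[OF assms(1) st(1,2)] .
  also have "\<dots> \<le> M * (d - c)"
    using st lipschitz_on_nonneg[OF assms(1)] by (intro mult_left_mono) (auto simp: dist_real_def)
  finally show "norm (x - y) \<le> M * (d - c)"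
    using st by (simp add: dist_norm)
qed

lemma infdist_bilipschitz_image_ge:
  assumes "bilipschitz_on m M S v" and "{c..d} \<subseteq> S" and "c < d" and "\<tau> \<in> S"
  shows "m * infdist \<tau> {c<..<d} \<le> infdist (v \<tau>) (v ` {c..d})"
proof -
  have "m * infdist \<tau> {c<..<d} \<le> dist (v \<tau>) (v z)" if "z \<in> {c..d}" for z
  proof -
    have "infdist z {c<..<d} = 0"
      using in_closure_iff_infdist_zero[of "{c<..<d}" z] that \<open>c < d\<close> by simp
    then have "infdist \<tau> {c<..<d} \<le> dist \<tau> z"
      using infdist_triangle[of \<tau> "{c<..<d}" z] by simp
    then have "m * infdist \<tau> {c<..<d} \<le> m * dist \<tau> z"
      using assms(1) by (simp add: bilipschitz_on_def)
    also have "\<dots> \<le> dist (v \<tau>) (v z)"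
      using assms that unfolding bilipschitz_on_def by blast
    finally show ?thesis .
  qed
  then show ?thesis
    using \<open>c < d\<close> by (subst infdist_notempty) (auto intro!: cINF_greatest)
qed

lemma spacing_ratio_bilipschitz_image:
  assumes v: "bilipschitz_on m M S v" and "{c..d} \<subseteq> S" and "c < d"
    and "\<tau> \<in> S" and "\<tau> \<notin> {c..d}"
  shows "spacing_ratio (interior (v ` {c..d})) (v \<tau>) \<le> M / m * spacing_ratio {c<..<d} \<tau>"
proof -
  let ?U = "interior (v ` {c..d})"
  have "closure ?U = v ` {c..d}"
    using closure_interior_bilipschitz_image[OF assms(1-3)] .
  then have "?U \<noteq> {}"
    using \<open>c < d\<close> by auto
  then have "infdist (v \<tau>) (v ` {c..d}) \<le> infdist (v \<tau>) ?U"
    by (intro infdist_mono interior_subset)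
  then have far: "m * infdist \<tau> {c<..<d} \<le> infdist (v \<tau>) ?U"
    using infdist_bilipschitz_image_ge[OF assms(1-4)] by linarith
  have "0 < infdist \<tau> {c<..<d}"
    using in_closure_iff_infdist_zero[of "{c<..<d}" \<tau>] infdist_nonneg[of \<tau> "{c<..<d}"]
      \<open>c < d\<close> \<open>\<tau> \<notin> {c..d}\<close> by auto
  moreover have "0 < m" and lip: "M-lipschitz_on {c..d} v"
    using v assms(2) by (auto simp: bilipschitz_on_def intro: lipschitz_on_subset)
  moreover have "bounded (v ` {c..d})"
    using lipschitz_on_continuous_on[OF lip] by (intro compact_imp_bounded compact_continuous_image) auto
  then have "diameter ?U \<le> M * (d - c)"
    using diameter_image_le_lipschitz[OF lip] diameter_subset[OF interior_subset] \<open>c < d\<close> by force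
  ultimately have "diameter ?U / infdist (v \<tau>) ?U \<le> (M * (d - c)) / (m * infdist \<tau> {c<..<d})"
    using far \<open>c < d\<close> lipschitz_on_nonneg[OF lip] by (intro frac_le) auto
  then show ?thesis
    using \<open>c < d\<close> by (simp add: spacing_ratio_def)
qed

lemma spacing_ratio_comp_branch_le:
  fixes v :: "real \<Rightarrow> real"
  assumes v: "bilipschitz_on m M {-1..1} v" and image: "v ` {-1..1} = {a..b}"
    and "{a..b} \<subseteq> {-1..1}" and "{c..d} \<subseteq> {-1..1}" and "c < d"
    and \<sigma>: "\<sigma> \<in> {-1, 1}" "\<sigma> \<notin> closure (interior (v ` {c..d}))"
    and Xf: "\<sigma> \<notin> closure {a<..<b} \<Longrightarrow> spacing_ratio {a<..<b} \<sigma> \<le> Xf"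
    and Xg: "\<And>\<tau>. \<tau> \<in> {-1, 1} \<Longrightarrow> \<tau> \<notin> closure {c<..<d} \<Longrightarrow> spacing_ratio {c<..<d} \<tau> \<le> Xg"
  shows "spacing_ratio (interior (v ` {c..d})) \<sigma> \<le> max Xf (M / m * Xg)"
proof (cases "\<sigma> \<in> {a..b}")
  case True
  then obtain \<tau> where \<tau>: "\<tau> \<in> {-1..1}" "v \<tau> = \<sigma>"
    using image by (metis imageE)
  have "\<tau> \<in> {-1, 1}"
    using continuous_inj_on_extremal_value_at_endpoint[of "-1" 1 v "-1" 1 \<tau>]
      bilipschitz_on_continuous_on[OF v] bilipschitz_on_inj_on[OF v] image assms(3) \<tau> \<sigma>(1)
    by simp
  moreover have "\<tau> \<notin> {c..d}"
    using closure_interior_bilipschitz_image[OF v assms(4,5)] \<tau>(2) \<sigma>(2) by blast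
  ultimately have "spacing_ratio {c<..<d} \<tau> \<le> Xg"
    using Xg \<open>c < d\<close> by simp
  moreover have "0 \<le> M / m"
    using v lipschitz_on_nonneg[of M "{-1..1}" v] by (simp add: bilipschitz_on_def)
  ultimately have "M / m * spacing_ratio {c<..<d} \<tau> \<le> M / m * Xg"
    by (rule mult_left_mono)
  moreover have "spacing_ratio (interior (v ` {c..d})) \<sigma> \<le> M / m * spacing_ratio {c<..<d} \<tau>"
    using spacing_ratio_bilipschitz_image[OF v assms(4,5) \<tau>(1)] \<tau>(2) \<open>\<tau> \<notin> {c..d}\<close> by simp
  ultimately show ?thesis
    by linarith
next
  case False
  have "interior (v ` {c..d}) \<subseteq> interior {a..b}"
    using image assms(4) by (intro interior_mono) auto
  then have "interior (v ` {c..d}) \<subseteq> {a<..<b}"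
    by simp
  moreover have "closure {a<..<b} \<subseteq> {a..b}"
    by (rule closure_minimal) auto
  then have "\<sigma> \<notin> closure {a<..<b}"
    using False by blast
  ultimately have "spacing_ratio (interior (v ` {c..d})) \<sigma> \<le> spacing_ratio {a<..<b} \<sigma>"
    by (rule spacing_ratio_mono[OF _ bounded_Ioo])
  then show ?thesis
    using Xf[OF \<open>\<sigma> \<notin> closure {a<..<b}\<close>] by linarith
qed

lemma inv_branch_image:
  assumes "full_branch_markov f J a b fh" and "i \<in> J"
  shows "inv_branch a b fh i ` {-1..1} = {a i..b i}"
proof -
  have "bij_betw (fh i) {a i..b i} {-1..1}"
    using assms unfolding full_branch_markov_def by blast
  from bij_betw_inv_into[OF this] show ?thesis
    unfolding inv_branch_def bij_betw_def by blast
qed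

lemma inv_branch_bilipschitz:
  assumes markov: "full_branch_markov f J a b fh" and "bounded_distortion J a b fh"
  shows "\<exists>K. \<forall>i\<in>J. \<exists>m. bilipschitz_on m (K * m) {-1..1} (inv_branch a b fh i)"
proof -
  obtain C0 where C0: "\<And>i. i \<in> J \<Longrightarrow> \<exists>v' v''. \<forall>x\<in>{-1..1}.
      (inv_branch a b fh i has_real_derivative v' x) (at x within {-1..1}) \<and>
      (v' has_real_derivative v'' x) (at x within {-1..1}) \<and> \<bar>v'' x / v' x\<bar> \<le> C0"
    using assms(2) unfolding bounded_distortion_def by blast
  define C where "C = max C0 0"
  define E where "E = exp (C * (1 - -1))"
  have "\<exists>m. bilipschitz_on m (E\<^sup>2 * m) {-1..1} (inv_branch a b fh i)" if i: "i \<in> J" for i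
  proof -
    obtain v' v'' where v: "\<And>x. x \<in> {-1..1} \<Longrightarrow>
        (inv_branch a b fh i has_real_derivative v' x) (at x within {-1..1}) \<and>
        (v' has_real_derivative v'' x) (at x within {-1..1}) \<and> \<bar>v'' x / v' x\<bar> \<le> C0"
      using C0[OF i] by blast
    have bij: "bij_betw (fh i) {a i..b i} {-1..1}"
      using markov i unfolding full_branch_markov_def by blast
    have "C2_on_interval (fh i) (a i) (b i)"
      using markov i unfolding full_branch_markov_def by blast
    then obtain h' where h': "\<And>y. y \<in> {a i..b i} \<Longrightarrow>
        (fh i has_real_derivative h' y) (at y within {a i..b i})"
      unfolding C2_on_interval_def by blast
    have "v' t \<noteq> 0" if "t \<in> {-1<..<1}" for t
    proof (rule has_real_derivative_inv_into_nonzero[OF bij h' _ that])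
      show "(inv_into {a i..b i} (fh i) has_real_derivative v' t) (at t within {-1..1})"
        using v[of t] that unfolding inv_branch_def by simp
    qed
    moreover have "\<bar>v'' t / v' t\<bar> \<le> C" if "t \<in> {-1..1}" for t
      using v[OF that] unfolding C_def by linarith
    ultimately have "bilipschitz_on (\<bar>v' 0\<bar> / E) (E * \<bar>v' 0\<bar>) {-1..1} (inv_branch a b fh i)"
      unfolding E_def using v
      by (intro bilipschitz_on_of_distortion_bound[of "-1" 1 0 C _ v' v'']) (simp_all add: C_def)
    moreover have "E * \<bar>v' 0\<bar> = E\<^sup>2 * (\<bar>v' 0\<bar> / E)"
      unfolding E_def by (simp add: power2_eq_square)
    ultimately show ?thesis
      by metis
  qed
  then show ?thesis
    by blast
qed

lemma comp_branch_spacing_ratio_le: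
  assumes "full_branch_markov f Jf af bf fhf" and "full_branch_markov g Jg ag bg fhg"
    and "\<phi> \<in> Jf" and "\<gamma> \<in> Jg"
    and v: "bilipschitz_on m (K * m) {-1..1} (inv_branch af bf fhf \<phi>)"
    and Xf: "\<And>\<sigma>. \<sigma> \<in> {-1, 1} \<Longrightarrow> \<sigma> \<notin> closure {af \<phi><..<bf \<phi>} \<Longrightarrow>
      spacing_ratio {af \<phi><..<bf \<phi>} \<sigma> \<le> Xf"
    and Xg: "\<And>\<tau>. \<tau> \<in> {-1, 1} \<Longrightarrow> \<tau> \<notin> closure {ag \<gamma><..<bg \<gamma>} \<Longrightarrow>
      spacing_ratio {ag \<gamma><..<bg \<gamma>} \<tau> \<le> Xg"
    and U: "U = interior (inv_branch af bf fhf \<phi> ` inv_branch ag bg fhg \<gamma> ` {-1..1})"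
    and \<sigma>: "\<sigma> \<in> {-1, 1}" "\<sigma> \<notin> closure U"
  shows "spacing_ratio U \<sigma> \<le> max Xf (K * Xg)"
proof -
  have U_eq: "U = interior (inv_branch af bf fhf \<phi> ` {ag \<gamma>..bg \<gamma>})"
    using U inv_branch_image[OF assms(2,4)] by simp
  have "K * m / m = K"
    using v by (simp add: bilipschitz_on_def)
  moreover have "{af \<phi>..bf \<phi>} \<subseteq> {-1..1}" "{ag \<gamma>..bg \<gamma>} \<subseteq> {-1..1}" "ag \<gamma> < bg \<gamma>"
    using assms(1-4) unfolding full_branch_markov_def by auto
  ultimately show ?thesis
    using spacing_ratio_comp_branch_le[OF v inv_branch_image[OF assms(1,3)] _ _ _
        \<sigma>(1) \<sigma>(2)[unfolded U_eq] Xf[OF \<sigma>(1)] Xg]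
    unfolding U_eq by simp
qed

theorem lemma6:
  fixes f g :: "real \<Rightarrow> real"
    and Jf :: "'i set" and af bf :: "'i \<Rightarrow> real" and fhf :: "'i \<Rightarrow> real \<Rightarrow> real"
    and Jg :: "'j set" and ag bg :: "'j \<Rightarrow> real" and fhg :: "'j \<Rightarrow> real \<Rightarrow> real"
  assumes "full_branch_markov f Jf af bf fhf"
    and "full_branch_markov g Jg ag bg fhg"
    and "partition_spacing (branches Jf af bf)"
    and "partition_spacing (branches Jg ag bg)"
    and "bounded_distortion Jf af bf fhf"
    and "uniformly_expanding g Jg ag bg"
  shows "partition_spacing (comp_branches Jf af bf fhf Jg ag bg fhg)"
proof -
  obtain Xf where Xf: "\<And>\<phi> \<sigma>. \<phi> \<in> Jf \<Longrightarrow> \<sigma> \<in> {-1, 1} \<Longrightarrow> \<sigma> \<notin> closure {af \<phi><..<bf \<phi>} \<Longrightarrow>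
      spacing_ratio {af \<phi><..<bf \<phi>} \<sigma> \<le> Xf"
    using assms(3) unfolding partition_spacing_iff_spacing_ratio branches_def by blast
  obtain Xg where Xg: "\<And>\<gamma> \<tau>. \<gamma> \<in> Jg \<Longrightarrow> \<tau> \<in> {-1, 1} \<Longrightarrow> \<tau> \<notin> closure {ag \<gamma><..<bg \<gamma>} \<Longrightarrow>
      spacing_ratio {ag \<gamma><..<bg \<gamma>} \<tau> \<le> Xg"
    using assms(4) unfolding partition_spacing_iff_spacing_ratio branches_def by blast
  obtain K where K: "\<And>\<phi>. \<phi> \<in> Jf \<Longrightarrow>
      \<exists>m. bilipschitz_on m (K * m) {-1..1} (inv_branch af bf fhf \<phi>)"
    using inv_branch_bilipschitz[OF assms(1,5)] by blast
  have "spacing_ratio U \<sigma> \<le> max Xf (K * Xg)"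
    if U: "U \<in> comp_branches Jf af bf fhf Jg ag bg fhg" and \<sigma>: "\<sigma> \<in> {-1, 1}" "\<sigma> \<notin> closure U"
    for U \<sigma>
  proof -
    obtain \<phi> \<gamma> where "\<phi> \<in> Jf" "\<gamma> \<in> Jg"
      and "U = interior (inv_branch af bf fhf \<phi> ` inv_branch ag bg fhg \<gamma> ` {-1..1})"
      using U unfolding comp_branches_def by blast
    moreover obtain m where "bilipschitz_on m (K * m) {-1..1} (inv_branch af bf fhf \<phi>)"
      using K[OF \<open>\<phi> \<in> Jf\<close>] by blast
    ultimately show ?thesis
      using comp_branch_spacing_ratio_le[OF assms(1,2)] Xf Xg \<sigma> by blast
  qed
  then show ?thesis
    unfolding partition_spacing_iff_spacing_ratio by blast
qed

end
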